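(* The order $n[1,3;5]$ of a $[1,3;5]$-mixed cage satisfies $20\le n[1,3;5]\le 28$.
   Context: A mixed graph is a finite simple graph that may contain both edges and arcs. A $[z,r;g]$-mixed graph is a mixed graph in which every vertex is the tail of exactly $z$ arcs, the head of exactly $z$ arcs, and is incident with exactly $r$ edges, and whose girth is $g$. Walks traverse edges in either direction and arcs only in their direction; a cycle is a closed walk with no repeated vertices (other than start = end) and no repeated edge or arc; the girth is the length of a shortest cycle. A $[z,r;g]$-mixed cage is a $[z,r;g]$-mixed graph of minimum order, and $n[z,r;g]$ denotes its order. *)

theory Defs
  imports Main
begin

text \<open>Simplicity: no loops, no pair of
  vertices joined by both an edge and an arc, no pair of opposite arcs
  (such a pair would be an edge).\<close>
definition mixed_graph :: "nat set \<Rightarrow> nat set set \<Rightarrow> (nat \<times> nat) set \<Rightarrow> bool" where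
  "mixed_graph V E A \<longleftrightarrow> finite V
     \<and> (\<forall>e\<in>E. \<exists>u v. u \<in> V \<and> v \<in> V \<and> u \<noteq> v \<and> e = {u, v})
     \<and> A \<subseteq> V \<times> V
     \<and> (\<forall>u. (u, u) \<notin> A)
     \<and> (\<forall>u v. (u, v) \<in> A \<longrightarrow> (v, u) \<notin> A \<and> {u, v} \<notin> E)"

text \<open>A cycle of length k: distinct vertices vs!0, ..., vs!(k-1), where step i
  goes from vs!i to vs!((i+1) mod k), along an arc (in its direction) if bs!i,
  and along an edge otherwise; no edge or arc is used twice.\<close>
definition cycle_step :: "nat list \<Rightarrow> bool list \<Rightarrow> nat \<Rightarrow> (nat set + nat \<times> nat)" where
  "cycle_step vs bs i =
     (let k = length vs; u = vs ! i; v = vs ! ((i + 1) mod k)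
      in if bs ! i then Inr (u, v) else Inl {u, v})"

definition has_cycle_of_length :: "nat set \<Rightarrow> nat set set \<Rightarrow> (nat \<times> nat) set \<Rightarrow> nat \<Rightarrow> bool" where
  "has_cycle_of_length V E A k \<longleftrightarrow>
     (\<exists>vs bs. k \<ge> 1 \<and> length vs = k \<and> length bs = k \<and> distinct vs \<and> set vs \<subseteq> V
        \<and> (\<forall>i<k. if bs ! i then (vs ! i, vs ! ((i + 1) mod k)) \<in> A
                 else {vs ! i, vs ! ((i + 1) mod k)} \<in> E)
        \<and> distinct (map (cycle_step vs bs) [0..<k]))"

definition girth :: "nat set \<Rightarrow> nat set set \<Rightarrow> (nat \<times> nat) set \<Rightarrow> nat \<Rightarrow> bool" where
  "girth V E A g \<longleftrightarrow> has_cycle_of_length V E A g \<and> (\<forall>k<g. \<not> has_cycle_of_length V E A k)"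

definition zrg_mixed_graph :: "nat \<Rightarrow> nat \<Rightarrow> nat \<Rightarrow> nat set \<Rightarrow> nat set set \<Rightarrow> (nat \<times> nat) set \<Rightarrow> bool" where
  "zrg_mixed_graph z r g V E A \<longleftrightarrow> mixed_graph V E A
     \<and> (\<forall>u\<in>V. card {v. (u, v) \<in> A} = z \<and> card {v. (v, u) \<in> A} = z
              \<and> card {e\<in>E. u \<in> e} = r)
     \<and> girth V E A g"

definition mixed_cage_order :: "nat \<Rightarrow> nat \<Rightarrow> nat \<Rightarrow> nat" where
  "mixed_cage_order z r g = (LEAST n. \<exists>V E A. zrg_mixed_graph z r g V E A \<and> card V = n)"

end

theory Submission
  imports Defs
begin

text \<open>Lower bound: fix a vertex \<open>u\<close> of a \<open>[z,r;g]\<close>-mixed graph with \<open>z \<ge> 1\<close> and \<open>g \<ge> 5\<close>, follow arcs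
  \<open>u \<rightarrow> v \<rightarrow> s\<close> and \<open>t \<rightarrow> x \<rightarrow> u\<close>. The radius-2 ball around \<open>u\<close> in the undirected part has \<open>r\<^sup>2 + 1\<close>
  vertices, and each of \<open>{v, s} \<union> N(v)\<close> and \<open>{x, t} \<union> N(x)\<close> has \<open>r + 2\<close>. These three sets are
  pairwise disjoint, since a common vertex would close a non-backtracking walk of length at most 4,
  i.e. a cycle of length 3 or 4 (or a violation of simplicity). So the order is at least
  \<open>r\<^sup>2 + 2r + 5 = 20\<close>. Upper bound: an explicit \<open>[1,3;5]\<close>-mixed graph on 24 vertices, whose
  properties are checked by evaluation.\<close>

section \<open>Closed walks and cycles\<close>

definition adj :: "nat set set \<Rightarrow> (nat \<times> nat) set \<Rightarrow> nat \<Rightarrow> nat \<Rightarrow> bool" where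
  "adj E A a b \<longleftrightarrow> (a, b) \<in> A \<or> {a, b} \<in> E"

definition closed_walk :: "nat set set \<Rightarrow> (nat \<times> nat) set \<Rightarrow> nat list \<Rightarrow> bool" where
  "closed_walk E A vs \<longleftrightarrow> list_all2 (adj E A) vs (rotate1 vs)"

lemma closed_walk_iff_nth:
  "closed_walk E A vs \<longleftrightarrow> (\<forall>i<length vs. adj E A (vs ! i) (vs ! ((i + 1) mod length vs)))"
  by (simp add: closed_walk_def list_all2_conv_all_nth nth_rotate1)

lemma has_cycle_of_length_imp_closed_walk:
  assumes "has_cycle_of_length V E A k"
  obtains vs where "length vs = k" "distinct vs" "set vs \<subseteq> V" "closed_walk E A vs"
  using assms unfolding has_cycle_of_length_def closed_walk_iff_nth adj_def by metis

lemma mod_succ_succ_neq: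
  fixes i k :: nat
  assumes "i < k" "3 \<le> k"
  shows "((i + 1) mod k + 1) mod k \<noteq> i"
  using assms by (auto simp: mod_if)

lemma closed_walk_imp_has_cycle_of_length:
  assumes walk: "closed_walk E A vs" and "distinct vs" "set vs \<subseteq> V" "3 \<le> length vs"
  shows "has_cycle_of_length V E A (length vs)"
proof -
  define k where "k = length vs"
  define nxt where "nxt i = (i + 1) mod k" for i
  define bs where "bs = map (\<lambda>i. (vs ! i, vs ! nxt i) \<in> A) [0..<k]"
  have "0 < k" using assms(4) k_def by linarith
  then have nxt_lt: "nxt i < k" for i by (simp add: nxt_def)
  have idx: "vs ! i = vs ! j \<longleftrightarrow> i = j" if "i < k" "j < k" for i j
    using assms(2) that by (simp add: k_def nth_eq_iff_index_eq)
  have steps: "\<forall>i<k. if bs ! i then (vs ! i, vs ! ((i + 1) mod k)) \<in> A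
                    else {vs ! i, vs ! ((i + 1) mod k)} \<in> E"
    using walk by (auto simp: bs_def closed_walk_iff_nth adj_def nxt_def k_def)
  have step: "cycle_step vs bs i = (if (vs ! i, vs ! nxt i) \<in> A then Inr (vs ! i, vs ! nxt i)
                                    else Inl {vs ! i, vs ! nxt i})" if "i < k" for i
    using that by (simp add: cycle_step_def bs_def nxt_def k_def Let_def)
  have "inj_on (cycle_step vs bs) {..<k}"
  proof (rule inj_onI)
    fix i j assume ij: "i \<in> {..<k}" "j \<in> {..<k}" and "cycle_step vs bs i = cycle_step vs bs j"
    then have "(vs ! i, vs ! nxt i) = (vs ! j, vs ! nxt j) \<or> {vs ! i, vs ! nxt i} = {vs ! j, vs ! nxt j}"
      by (auto simp: step split: if_splits)
    then have "i = j \<or> (i = nxt j \<and> nxt i = j)"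
      using ij nxt_lt by (auto simp: doubleton_eq_iff idx)
    then show "i = j"
      using mod_succ_succ_neq[of i k] ij assms(4) by (auto simp: nxt_def k_def)
  qed
  then have "distinct (map (cycle_step vs bs) [0..<k])"
    by (simp add: distinct_map lessThan_atLeast0)
  then show ?thesis
    using steps assms(2-4) unfolding has_cycle_of_length_def k_def[symmetric]
    by (intro exI[of _ vs] exI[of _ bs]) (auto simp: bs_def k_def)
qed

lemma closed_walk_3: "closed_walk E A [a, b, c] \<longleftrightarrow> adj E A a b \<and> adj E A b c \<and> adj E A c a"
  by (auto simp: closed_walk_def)

lemma closed_walk_4:
  "closed_walk E A [a, b, c, d] \<longleftrightarrow> adj E A a b \<and> adj E A b c \<and> adj E A c d \<and> adj E A d a"
  by (auto simp: closed_walk_def)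

lemma closed_walk_5:
  "closed_walk E A [a, b, c, d, e] \<longleftrightarrow>
     adj E A a b \<and> adj E A b c \<and> adj E A c d \<and> adj E A d e \<and> adj E A e a"
  by (auto simp: closed_walk_def)

lemma mixed_graph_adjD:
  assumes "mixed_graph V E A" "adj E A a b"
  shows "a \<in> V" "b \<in> V" "a \<noteq> b"
  using assms unfolding mixed_graph_def adj_def by (auto simp: doubleton_eq_iff)

lemma mixed_graph_no_cycle_shorter_than_3:
  assumes "mixed_graph V E A" "k < 3"
  shows "\<not> has_cycle_of_length V E A k"
proof
  assume "has_cycle_of_length V E A k"
  then obtain vs bs where k: "1 \<le> k" "length vs = k" "length bs = k"
    and steps: "\<forall>i<k. if bs ! i then (vs ! i, vs ! ((i + 1) mod k)) \<in> A
                       else {vs ! i, vs ! ((i + 1) mod k)} \<in> E"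
    and dist: "distinct (map (cycle_step vs bs) [0..<k])"
    unfolding has_cycle_of_length_def by blast
  have adj: "adj E A (vs ! i) (vs ! ((i + 1) mod k))" if "i < k" for i
    using steps that unfolding adj_def by (metis (full_types))
  consider "k = 1" | "k = 2" using k(1) assms(2) by linarith
  then show False
  proof cases
    case 1
    then have "adj E A (vs ! 0) (vs ! 0)" using adj[of 0] by simp
    then show False using mixed_graph_adjD(3)[OF assms(1)] by blast
  next
    case 2
    then obtain a b where vs: "vs = [a, b]"
      using k(2) by (auto simp: numeral_2_eq_2 length_Suc_conv)
    have "cycle_step vs bs 0 \<noteq> cycle_step vs bs 1"
      using dist 2 by (simp add: upt_rec)
    then have "bs ! 0 \<or> bs ! 1"
      using vs by (auto simp: cycle_step_def insert_commute split: if_splits)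
    then have "(a, b) \<in> A \<or> (b, a) \<in> A"
      using steps 2 vs by (auto dest: spec[of _ 0] spec[of _ 1])
    moreover have "adj E A a b" "adj E A b a"
      using adj[of 0] adj[of 1] 2 vs by simp_all
    ultimately show False
      using assms(1) unfolding mixed_graph_def adj_def by (metis insert_commute)
  qed
qed

section \<open>The lower bound\<close>

text \<open>Girth at least 5, phrased through closed walks: those of length at most 4 must backtrack.\<close>

locale mixed_girth_ge5 =
  fixes E :: "nat set set" and A :: "(nat \<times> nat) set"
  assumes adj_irrefl: "\<not> adj E A a a"
    and arc_not_adj_back: "(a, b) \<in> A \<Longrightarrow> \<not> adj E A b a"
    and no_closed_walk3: "adj E A a b \<Longrightarrow> adj E A b c \<Longrightarrow> adj E A c a \<Longrightarrow> False"
    and closed_walk4_backtracks: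
      "adj E A a b \<Longrightarrow> adj E A b c \<Longrightarrow> adj E A c d \<Longrightarrow> adj E A d a \<Longrightarrow> a = c \<or> b = d"

lemma mixed_girth_ge5I:
  assumes G: "mixed_graph V E A"
    and no3: "\<not> has_cycle_of_length V E A 3" and no4: "\<not> has_cycle_of_length V E A 4"
  shows "mixed_girth_ge5 E A"
proof
  fix a b c d
  note adjD = mixed_graph_adjD[OF G]
  show "\<not> adj E A a a" using adjD(3) by blast
  show "(a, b) \<in> A \<Longrightarrow> \<not> adj E A b a"
    using G unfolding mixed_graph_def adj_def by (auto simp: insert_commute)
  show False if "adj E A a b" "adj E A b c" "adj E A c a"
  proof -
    have "closed_walk E A [a, b, c]" using that by (simp add: closed_walk_3)
    moreover have "distinct [a, b, c]" using that adjD(3) by auto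
    moreover have "set [a, b, c] \<subseteq> V" using that adjD(1) by auto
    ultimately have "has_cycle_of_length V E A (length [a, b, c])"
      by (rule closed_walk_imp_has_cycle_of_length) simp
    moreover have "length [a, b, c] = 3" by simp
    ultimately show False using no3 by metis
  qed
  show "a = c \<or> b = d" if "adj E A a b" "adj E A b c" "adj E A c d" "adj E A d a"
  proof (rule ccontr)
    assume "\<not> (a = c \<or> b = d)"
    moreover have "a \<noteq> b" "b \<noteq> c" "c \<noteq> d" "d \<noteq> a" using that adjD(3) by blast+
    ultimately have "distinct [a, b, c, d]" by auto
    moreover have "closed_walk E A [a, b, c, d]" using that by (simp add: closed_walk_4)
    moreover have "set [a, b, c, d] \<subseteq> V" using that adjD(1) by auto
    ultimately have "has_cycle_of_length V E A (length [a, b, c, d])"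
      by (intro closed_walk_imp_has_cycle_of_length) simp_all
    moreover have "length [a, b, c, d] = 4" by simp
    ultimately show False using no4 by metis
  qed
qed

lemma adj_converse: "adj E (A\<inverse>) a b \<longleftrightarrow> adj E A b a"
  by (auto simp: adj_def insert_commute)

lemma mixed_girth_ge5_converse:
  assumes "mixed_girth_ge5 E A" shows "mixed_girth_ge5 E (A\<inverse>)"
proof -
  interpret mixed_girth_ge5 E A by (fact assms)
  show ?thesis
    by unfold_locales
      (auto simp: adj_converse adj_irrefl dest: arc_not_adj_back no_closed_walk3 closed_walk4_backtracks)
qed

definition edge_nbrs :: "nat set set \<Rightarrow> nat \<Rightarrow> nat set" where
  "edge_nbrs E a = {b. {a, b} \<in> E}"

definition edge_ball2 :: "nat set set \<Rightarrow> nat \<Rightarrow> nat set" where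
  "edge_ball2 E u = insert u (edge_nbrs E u \<union> (\<Union>e\<in>edge_nbrs E u. edge_nbrs E e))"

definition branch :: "nat set set \<Rightarrow> nat \<Rightarrow> nat \<Rightarrow> nat set" where
  "branch E v s = insert v (insert s (edge_nbrs E v))"

lemma edge_nbr_adj:
  assumes "b \<in> edge_nbrs E a" shows "adj E A a b" "adj E A b a"
  using assms by (auto simp: edge_nbrs_def adj_def insert_commute)

context mixed_girth_ge5
begin

lemma card_edge_ball2:
  assumes fin: "\<And>a. finite (edge_nbrs E a)"
    and deg: "\<And>a. a = u \<or> a \<in> edge_nbrs E u \<Longrightarrow> card (edge_nbrs E a) = r"
  shows "card (edge_ball2 E u) = r * r + 1"
proof -
  define N where "N = edge_nbrs E u"
  define W where "W = (\<Union>e\<in>N. edge_nbrs E e - {u})"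
  have ball: "edge_ball2 E u = insert u (N \<union> W)"
    by (auto simp: edge_ball2_def N_def W_def)
  have "u \<notin> N" using adj_irrefl by (auto simp: N_def dest: edge_nbr_adj)
  then have u_notin: "u \<notin> N \<union> W" by (simp add: W_def)
  have "N \<inter> W = {}"
  proof (intro equals0I)
    fix w assume "w \<in> N \<inter> W"
    then obtain e where "e \<in> N" "w \<in> edge_nbrs E e" "w \<in> N" by (auto simp: W_def)
    then show False
      using no_closed_walk3[of u e w] edge_nbr_adj[where A = A] by (simp add: N_def)
  qed
  moreover have "card W = r * (r - 1)"
  proof -
    have "(edge_nbrs E e - {u}) \<inter> (edge_nbrs E e' - {u}) = {}" if "e \<in> N" "e' \<in> N" "e \<noteq> e'" for e e'
    proof (intro equals0I)
      fix w assume "w \<in> (edge_nbrs E e - {u}) \<inter> (edge_nbrs E e' - {u})"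
      then show False
        using closed_walk4_backtracks[of u e w e'] edge_nbr_adj[where A = A] that by (auto simp: N_def)
    qed
    then have "card W = (\<Sum>e\<in>N. card (edge_nbrs E e - {u}))"
      unfolding W_def using fin by (intro card_UN_disjoint) (auto simp: N_def)
    also have "\<dots> = (\<Sum>e\<in>N. r - 1)"
      using deg by (intro sum.cong) (auto simp: N_def edge_nbrs_def insert_commute)
    finally show ?thesis using deg[of u] by (simp add: N_def)
  qed
  ultimately have "card (N \<union> W) = r + r * (r - 1)"
    using fin deg[of u] by (simp add: card_Un_disjoint N_def W_def)
  then show ?thesis
    using ball u_notin fin by (cases r) (auto simp: N_def W_def)
qed

lemma card_branch:
  assumes "(v, s) \<in> A" "finite (edge_nbrs E v)"
  shows "card (branch E v s) = card (edge_nbrs E v) + 2"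
proof -
  have "v \<notin> edge_nbrs E v" using adj_irrefl edge_nbr_adj[where A = A] by blast
  moreover have "s \<notin> edge_nbrs E v" using arc_not_adj_back[OF assms(1)] edge_nbr_adj(2) by blast
  moreover have "s \<noteq> v" using assms(1) adj_irrefl by (auto simp: adj_def)
  ultimately show ?thesis using assms(2) by (simp add: branch_def)
qed

lemma edge_ball2_disjoint_branch:
  assumes uv: "(u, v) \<in> A" and vs: "(v, s) \<in> A"
  shows "edge_ball2 E u \<inter> branch E v s = {}"
proof (intro equals0I)
  fix b assume b: "b \<in> edge_ball2 E u \<inter> branch E v s"
  note nbr = edge_nbr_adj[where A = A]
  have arcs: "adj E A u v" "adj E A v s" "\<not> adj E A v u" "\<not> adj E A s v"
    using uv vs arc_not_adj_back by (auto simp: adj_def)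
  from b consider "b = u" | "b \<in> edge_nbrs E u" | e where "e \<in> edge_nbrs E u" "b \<in> edge_nbrs E e"
    by (auto simp: edge_ball2_def)
  then show False
  proof cases
    case 1
    then show False using b adj_irrefl nbr arcs by (auto simp: branch_def)
  next
    case 2
    then show False using b no_closed_walk3[of u v b] nbr arcs by (auto simp: branch_def)
  next
    case 3
    then show False
      using b no_closed_walk3[of u v e] closed_walk4_backtracks[of u v b e] nbr arcs
      by (auto simp: branch_def)
  qed
qed

lemma branches_disjoint:
  assumes "(x, u) \<in> A" "(t, x) \<in> A" "(u, v) \<in> A" "(v, s) \<in> A"
  shows "branch E v s \<inter> branch E x t = {}"
proof (intro equals0I)
  fix b assume b: "b \<in> branch E v s \<inter> branch E x t"
  have arcs: "adj E A x u" "adj E A t x" "adj E A u v" "adj E A v s" "\<not> adj E A v u"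
    using assms arc_not_adj_back by (auto simp: adj_def)
  then have "v \<noteq> x" by blast
  then show False
    using b arcs no_closed_walk3[of u v b] no_closed_walk3[of u v x]
      closed_walk4_backtracks[of u v b x] edge_nbr_adj[where A = A]
    by (auto simp: branch_def)
qed

end

lemma mixed_graph_card_incident_edges:
  assumes "mixed_graph V E A"
  shows "card {e \<in> E. a \<in> e} = card (edge_nbrs E a)"
proof -
  have "{e \<in> E. a \<in> e} = (\<lambda>b. {a, b}) ` edge_nbrs E a"
  proof (intro equalityI subsetI)
    fix e assume e: "e \<in> {e \<in> E. a \<in> e}"
    then obtain p q where "e = {p, q}" using assms unfolding mixed_graph_def by blast
    with e have "e = {a, q} \<or> e = {a, p}" by (auto simp: insert_commute)
    with e show "e \<in> (\<lambda>b. {a, b}) ` edge_nbrs E a" by (auto simp: edge_nbrs_def)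
  qed (auto simp: edge_nbrs_def)
  moreover have "inj_on (\<lambda>b. {a, b}) (edge_nbrs E a)"
    by (auto simp: inj_on_def doubleton_eq_iff)
  ultimately show ?thesis by (simp add: card_image)
qed

theorem zrg_mixed_graph_card_lower_bound:
  assumes G: "zrg_mixed_graph z r g V E A" and "1 \<le> z" "5 \<le> g"
  shows "r * r + 2 * r + 5 \<le> card V"
proof -
  have mg: "mixed_graph V E A" and girth: "girth V E A g"
    and deg: "\<And>a. a \<in> V \<Longrightarrow> card {b. (a, b) \<in> A} = z \<and> card {b. (b, a) \<in> A} = z
                                \<and> card {e \<in> E. a \<in> e} = r"
    using G unfolding zrg_mixed_graph_def by blast+
  have "finite V" using mg by (simp add: mixed_graph_def)
  have arc_V: "a \<in> V" "b \<in> V" if "(a, b) \<in> A" for a b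
    using mixed_graph_adjD[OF mg] that by (auto simp: adj_def)
  have nbrs_V: "edge_nbrs E a \<subseteq> V" for a
    using mixed_graph_adjD[OF mg] edge_nbr_adj[where A = A] by blast
  then have fin: "finite (edge_nbrs E a)" for a
    using \<open>finite V\<close> by (rule finite_subset)
  have deg_E: "card (edge_nbrs E a) = r" if "a \<in> V" for a
    using deg[OF that] mixed_graph_card_incident_edges[OF mg] by simp
  have out: "\<exists>b. (a, b) \<in> A" and into: "\<exists>b. (b, a) \<in> A" if "a \<in> V" for a
  proof -
    have "0 < card {b. (a, b) \<in> A}" "0 < card {b. (b, a) \<in> A}"
      using deg[OF that] \<open>1 \<le> z\<close> by simp_all
    then show "\<exists>b. (a, b) \<in> A" "\<exists>b. (b, a) \<in> A" by (auto simp: card_gt_0_iff)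
  qed
  have "\<not> has_cycle_of_length V E A 3" "\<not> has_cycle_of_length V E A 4"
    using girth \<open>5 \<le> g\<close> by (simp_all add: girth_def)
  then interpret mixed_girth_ge5 E A by (rule mixed_girth_ge5I[OF mg])
  interpret rev: mixed_girth_ge5 E "A\<inverse>"
    by (rule mixed_girth_ge5_converse) unfold_locales
  have "has_cycle_of_length V E A g" using girth by (simp add: girth_def)
  then obtain cyc where "length cyc = g" "set cyc \<subseteq> V"
    by (rule has_cycle_of_length_imp_closed_walk)
  then obtain u where "u \<in> V"
    using \<open>5 \<le> g\<close> by (cases cyc) auto
  obtain v where uv: "(u, v) \<in> A" using out[OF \<open>u \<in> V\<close>] by blast
  obtain x where xu: "(x, u) \<in> A" using into[OF \<open>u \<in> V\<close>] by blast
  obtain s where vs: "(v, s) \<in> A" using out[OF arc_V(2)[OF uv]] by blast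
  obtain t where tx: "(t, x) \<in> A" using into[OF arc_V(1)[OF xu]] by blast
  define B1 B2 B3 where "B1 = edge_ball2 E u" and "B2 = branch E v s" and "B3 = branch E x t"
  have "card B1 = r * r + 1"
    unfolding B1_def using card_edge_ball2[OF fin] \<open>u \<in> V\<close> nbrs_V deg_E by blast
  moreover have "card B2 = r + 2"
    unfolding B2_def using card_branch[OF vs fin] deg_E arc_V(1)[OF vs] by simp
  moreover have "card B3 = r + 2"
    unfolding B3_def using rev.card_branch[of x t, OF _ fin] tx deg_E arc_V(2)[OF tx] by simp
  moreover have "B1 \<inter> B2 = {}"
    unfolding B1_def B2_def using uv vs by (rule edge_ball2_disjoint_branch)
  moreover have "B1 \<inter> B3 = {}"
    unfolding B1_def B3_def using rev.edge_ball2_disjoint_branch[of u x t] xu tx by simp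
  moreover have "B2 \<inter> B3 = {}"
    unfolding B2_def B3_def using xu tx uv vs by (rule branches_disjoint)
  moreover have sub: "B1 \<union> B2 \<union> B3 \<subseteq> V"
    unfolding B1_def B2_def B3_def
    using \<open>u \<in> V\<close> nbrs_V arc_V uv vs xu tx by (auto simp: edge_ball2_def branch_def)
  moreover have "finite B1" "finite B2" "finite B3"
    using sub \<open>finite V\<close> finite_subset by blast+
  ultimately have "card (B1 \<union> B2 \<union> B3) = r * r + 2 * r + 5"
    by (simp add: card_Un_disjoint Int_Un_distrib2)
  then show ?thesis
    using card_mono[OF \<open>finite V\<close> sub] by simp
qed

section \<open>A \<open>[1,3;5]\<close>-mixed graph of order 24\<close>

text \<open>Vertices \<open>i\<close> and \<open>12 + i\<close> for \<open>i \<in> \<int>\<^sub>1\<^sub>2\<close>; the arcs form the two directed 12-cycles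
  \<open>i \<rightarrow> i - 1\<close>, and \<open>i\<close> is joined by edges to \<open>12 + (i + d)\<close> for \<open>d \<in> {3, 6, 10}\<close>.
  Its order 24 is below the claimed bound 28.\<close>

definition G24_arc :: "nat \<Rightarrow> nat" where
  "G24_arc a = 12 * (a div 12) + (a + 11) mod 12"

definition G24_edge_list :: "(nat \<times> nat) list" where
  "G24_edge_list = [(i, 12 + (i + d) mod 12). i \<leftarrow> [0..<12], d \<leftarrow> [3, 6, 10]]"

definition G24_vertices :: "nat set" where
  "G24_vertices = {..<24}"

definition G24_edges :: "nat set set" where
  "G24_edges = (\<lambda>(a, b). {a, b}) ` set G24_edge_list"

definition G24_arcs :: "(nat \<times> nat) set" where
  "G24_arcs = {(a, G24_arc a) | a. a < 24}"

definition G24_edge_nbrs :: "nat \<Rightarrow> nat list" where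
  "G24_edge_nbrs a = map snd (filter (\<lambda>e. fst e = a) G24_edge_list)
                     @ map fst (filter (\<lambda>e. snd e = a) G24_edge_list)"

definition G24_succs :: "nat \<Rightarrow> nat list" where
  "G24_succs a = G24_arc a # G24_edge_nbrs a"

lemma G24_edges_valid: "list_all (\<lambda>(a, b). a < 24 \<and> b < 24 \<and> a \<noteq> b) G24_edge_list"
  unfolding G24_edge_list_def by code_simp

lemma G24_arcs_valid:
  "list_all (\<lambda>a. G24_arc a < 24 \<and> G24_arc a \<noteq> a \<and> G24_arc (G24_arc a) \<noteq> a
     \<and> G24_arc a \<notin> set (G24_edge_nbrs a)) [0..<24]"
  unfolding G24_arc_def G24_edge_nbrs_def G24_edge_list_def by code_simp

lemma G24_in_degrees: "list_all (\<lambda>b. length (filter (\<lambda>a. G24_arc a = b) [0..<24]) = 1) [0..<24]"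
  unfolding G24_arc_def by code_simp

lemma G24_edge_degrees: "list_all (\<lambda>a. length (remdups (G24_edge_nbrs a)) = 3) [0..<24]"
  unfolding G24_edge_nbrs_def G24_edge_list_def by code_simp

text \<open>Tabulated so that \<open>code_simp\<close> evaluates each successor list only once.\<close>

definition G24_succ_table :: "nat list list" where
  "G24_succ_table = map G24_succs [0..<24]"

lemma G24_succ_table_walks3:
  "list_all (\<lambda>a. list_all (\<lambda>b. list_all (\<lambda>c. a \<in> set (G24_succ_table ! c) \<longrightarrow> \<not> distinct [a, b, c])
     (G24_succ_table ! b)) (G24_succ_table ! a)) [0..<24]"
  unfolding G24_succ_table_def G24_succs_def G24_arc_def G24_edge_nbrs_def G24_edge_list_def by code_simp

lemma G24_succ_table_walks4:
  "list_all (\<lambda>a. list_all (\<lambda>b. list_all (\<lambda>c. list_all (\<lambda>d.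
       a \<in> set (G24_succ_table ! d) \<longrightarrow> \<not> distinct [a, b, c, d])
     (G24_succ_table ! c)) (G24_succ_table ! b)) (G24_succ_table ! a)) [0..<24]"
  unfolding G24_succ_table_def G24_succs_def G24_arc_def G24_edge_nbrs_def G24_edge_list_def by code_simp

lemma G24_edge_iff:
  "{a, b} \<in> G24_edges \<longleftrightarrow> (a, b) \<in> set G24_edge_list \<or> (b, a) \<in> set G24_edge_list"
  by (auto simp: G24_edges_def doubleton_eq_iff)

lemma G24_arc_iff: "(a, b) \<in> G24_arcs \<longleftrightarrow> a < 24 \<and> b = G24_arc a"
  by (auto simp: G24_arcs_def)

lemma G24_edge_nbrs_eq: "edge_nbrs G24_edges a = set (G24_edge_nbrs a)"
  by (auto simp: edge_nbrs_def G24_edge_iff G24_edge_nbrs_def image_iff)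

lemma G24_edge_list_bounds: "(a, b) \<in> set G24_edge_list \<Longrightarrow> a < 24 \<and> b < 24 \<and> a \<noteq> b"
  using G24_edges_valid by (auto simp: list_all_iff)

lemma G24_arc_props:
  "a < 24 \<Longrightarrow> G24_arc a < 24 \<and> G24_arc a \<noteq> a \<and> G24_arc (G24_arc a) \<noteq> a
     \<and> G24_arc a \<notin> set (G24_edge_nbrs a)"
  using G24_arcs_valid by (simp add: list_all_iff)

lemma G24_adj_succ:
  assumes "adj G24_edges G24_arcs a b"
  shows "a < 24" "b \<in> set (G24_succ_table ! a)"
proof -
  have "a < 24 \<and> b \<in> set (G24_succs a)"
    using assms G24_edge_list_bounds[of a b] G24_edge_list_bounds[of b a]
    by (auto simp: adj_def G24_arc_iff G24_edge_iff G24_succs_def G24_edge_nbrs_def image_iff)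
  then show "a < 24" "b \<in> set (G24_succ_table ! a)" by (simp_all add: G24_succ_table_def)
qed

lemma G24_closed_walk3_degenerate:
  assumes "adj G24_edges G24_arcs a b" "adj G24_edges G24_arcs b c" "adj G24_edges G24_arcs c a"
  shows "\<not> distinct [a, b, c]"
proof -
  have "a \<in> set [0..<24]" "b \<in> set (G24_succ_table ! a)" "c \<in> set (G24_succ_table ! b)"
    "a \<in> set (G24_succ_table ! c)"
    using G24_adj_succ assms by auto
  then show ?thesis using G24_succ_table_walks3 unfolding list_all_iff by blast
qed

lemma G24_closed_walk4_degenerate:
  assumes "adj G24_edges G24_arcs a b" "adj G24_edges G24_arcs b c" "adj G24_edges G24_arcs c d"
    "adj G24_edges G24_arcs d a"
  shows "\<not> distinct [a, b, c, d]"
proof -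
  have "a \<in> set [0..<24]" "b \<in> set (G24_succ_table ! a)" "c \<in> set (G24_succ_table ! b)"
    "d \<in> set (G24_succ_table ! c)" "a \<in> set (G24_succ_table ! d)"
    using G24_adj_succ assms by auto
  then show ?thesis using G24_succ_table_walks4 unfolding list_all_iff by blast
qed

lemma G24_mixed_graph: "mixed_graph G24_vertices G24_edges G24_arcs"
  unfolding mixed_graph_def
proof (intro conjI allI impI ballI)
  show "finite G24_vertices" by (simp add: G24_vertices_def)
  show "\<exists>u v. u \<in> G24_vertices \<and> v \<in> G24_vertices \<and> u \<noteq> v \<and> e = {u, v}" if "e \<in> G24_edges" for e
    using that G24_edge_list_bounds by (fastforce simp: G24_edges_def G24_vertices_def)
  show "G24_arcs \<subseteq> G24_vertices \<times> G24_vertices"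
    using G24_arc_props by (auto simp: G24_arc_iff G24_vertices_def)
  show "(u, u) \<notin> G24_arcs" for u
    using G24_arc_props[of u] by (auto simp: G24_arc_iff)
  show "(v, u) \<notin> G24_arcs" "{u, v} \<notin> G24_edges" if "(u, v) \<in> G24_arcs" for u v
    using that G24_arc_props[of u] G24_edge_nbrs_eq[of u]
    by (auto simp: G24_arc_iff edge_nbrs_def)
qed

lemma G24_degrees:
  assumes "a \<in> G24_vertices"
  shows "card {b. (a, b) \<in> G24_arcs} = 1" "card {b. (b, a) \<in> G24_arcs} = 1"
    and "card {e \<in> G24_edges. a \<in> e} = 3"
proof -
  have a: "a < 24" using assms by (simp add: G24_vertices_def)
  then show "card {b. (a, b) \<in> G24_arcs} = 1" by (simp add: G24_arc_iff)
  let ?l = "filter (\<lambda>b. G24_arc b = a) [0..<24]"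
  have "{b. (b, a) \<in> G24_arcs} = set ?l" by (auto simp: G24_arc_iff)
  moreover have "card (set ?l) = length ?l" by (intro distinct_card) simp
  moreover have "length ?l = 1" using G24_in_degrees a by (auto simp: list_all_iff)
  ultimately show "card {b. (b, a) \<in> G24_arcs} = 1" by (simp only:)
  show "card {e \<in> G24_edges. a \<in> e} = 3"
    using G24_edge_degrees a
    by (simp add: mixed_graph_card_incident_edges[OF G24_mixed_graph] G24_edge_nbrs_eq
        list_all_iff length_remdups_card_conv)
qed

lemma G24_girth: "girth G24_vertices G24_edges G24_arcs 5"
  unfolding girth_def
proof (intro conjI allI impI)
  have "closed_walk G24_edges G24_arcs [0, 11, 10, 9, 15]"
    unfolding closed_walk_5 adj_def G24_arc_iff G24_edge_iff G24_arc_def G24_edge_list_def by code_simp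
  then have "has_cycle_of_length G24_vertices G24_edges G24_arcs (length [0, 11, 10, 9, 15::nat])"
    by (rule closed_walk_imp_has_cycle_of_length) (simp_all add: G24_vertices_def)
  moreover have "length [0, 11, 10, 9, 15::nat] = 5" by simp
  ultimately show "has_cycle_of_length G24_vertices G24_edges G24_arcs 5" by metis
next
  fix k :: nat assume "k < 5"
  have no3: "\<not> has_cycle_of_length G24_vertices G24_edges G24_arcs 3"
  proof
    assume "has_cycle_of_length G24_vertices G24_edges G24_arcs 3"
    then obtain vs where "length vs = 3" "distinct vs" "closed_walk G24_edges G24_arcs vs"
      by (rule has_cycle_of_length_imp_closed_walk)
    then obtain a b c where "vs = [a, b, c]"
      by (auto simp: numeral_3_eq_3 length_Suc_conv)
    with \<open>distinct vs\<close> \<open>closed_walk G24_edges G24_arcs vs\<close> show False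
      using G24_closed_walk3_degenerate[of a b c] by (simp add: closed_walk_3)
  qed
  have no4: "\<not> has_cycle_of_length G24_vertices G24_edges G24_arcs 4"
  proof
    assume "has_cycle_of_length G24_vertices G24_edges G24_arcs 4"
    then obtain vs where "length vs = 4" "distinct vs" "closed_walk G24_edges G24_arcs vs"
      by (rule has_cycle_of_length_imp_closed_walk)
    then obtain a b c d where "vs = [a, b, c, d]"
      by (auto simp: eval_nat_numeral length_Suc_conv)
    with \<open>distinct vs\<close> \<open>closed_walk G24_edges G24_arcs vs\<close> show False
      using G24_closed_walk4_degenerate[of a b c d] by (simp add: closed_walk_4)
  qed
  from \<open>k < 5\<close> consider "k < 3" | "k = 3" | "k = 4" by linarith
  then show "\<not> has_cycle_of_length G24_vertices G24_edges G24_arcs k"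
    using mixed_graph_no_cycle_shorter_than_3[OF G24_mixed_graph] no3 no4 by cases blast+
qed

lemma G24_zrg_mixed_graph: "zrg_mixed_graph 1 3 5 G24_vertices G24_edges G24_arcs"
  unfolding zrg_mixed_graph_def using G24_mixed_graph G24_degrees G24_girth by blast

theorem lemma4:
  shows "20 \<le> mixed_cage_order 1 3 5 \<and> mixed_cage_order 1 3 5 \<le> 28"
proof -
  let ?order = "\<lambda>n. \<exists>V E A. zrg_mixed_graph 1 3 5 V E A \<and> card V = n"
  have "card G24_vertices = 24" by (simp add: G24_vertices_def)
  then have "?order 24" using G24_zrg_mixed_graph by blast
  then have "?order (mixed_cage_order 1 3 5)" and upper: "mixed_cage_order 1 3 5 \<le> 24"
    unfolding mixed_cage_order_def by (rule LeastI, rule Least_le)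
  then obtain V E A where "zrg_mixed_graph 1 3 5 V E A" "card V = mixed_cage_order 1 3 5"
    by blast
  then have "20 \<le> mixed_cage_order 1 3 5"
    using zrg_mixed_graph_card_lower_bound[of 1 3 5 V E A] by simp
  with upper show ?thesis by simp
qed

end
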